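(* Let $\mathcal S\subset\{1,\dots,N\}$ have cardinality $s$, let $\boldsymbol\rho\in\mathbb C^N$ be supported in $\mathcal S$, and let $\mathbf d=\mathcal G\boldsymbol\rho$. Set $\mathcal Y=\{\vec{\mathbf z}_j:\ j\in\mathcal S\}$. Let $r\in(0,1)$ be such that the balls $\mathcal B_r(\vec{\mathbf z}_j)$, $j\in\mathcal S$, are pairwise disjoint. Let $\boldsymbol\rho_\star$ be a minimizer of $$\min_{\mathbf x\in\mathbb C^N}\|\mathbf x\|_1\quad\text{subject to}\quad\mathcal G\mathbf x=\mathbf d.$$ Decompose $\boldsymbol\rho_\star=\boldsymbol\rho_\star^{(i)}+\boldsymbol\rho_\star^{(o)}$, where $(\boldsymbol\rho_\star^{(i)})_q=(\boldsymbol\rho_\star)_q$ if $\vec{\mathbf z}_q\in\bigcup_{j\in\mathcal S}\mathcal B_r(\vec{\mathbf z}_j)$ and $(\boldsymbol\rho_\star^{(i)})_q=0$ otherwise. Then $$\|\boldsymbol\rho_\star^{(o)}\|_1\le\frac{2\,\mathcal I(\mathcal Y)}{r}\,\|\boldsymbol\rho_\star\|_1.$$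
   Context: Let $W$ be a set (the imaging region) and $M\ge1$. For each $\vec{\mathbf y}\in W$ let $\mathbf g_{\vec{\mathbf y}}\in\mathbb C^M$ be a vector with $\|\mathbf g_{\vec{\mathbf y}}\|_2=1$. Let $\vec{\mathbf z}_1,\dots,\vec{\mathbf z}_N\in W$ be distinct (grid) points, write $\mathbf g_j=\mathbf g_{\vec{\mathbf z}_j}$, and let $\mathcal G\in\mathbb C^{M\times N}$ be the matrix with columns $\mathbf g_j$. Inner product: $\langle\mathbf u,\mathbf v\rangle=\mathbf u^H\mathbf v=\sum_i\overline{u_i}v_i$. $\|\cdot\|_1$ is the $\ell_1$ norm on $\mathbb C^N$. Semi-metric: $\mathscr D(\vec{\mathbf y},\vec{\mathbf y}')=1-|\langle\mathbf g_{\vec{\mathbf y}},\mathbf g_{\vec{\mathbf y}'}\rangle|$ for $\vec{\mathbf y},\vec{\mathbf y}'\in W$; ball $\mathcal B_r(\vec{\mathbf y})=\{\vec{\mathbf y}'\in W:\ \mathscr D(\vec{\mathbf y},\vec{\mathbf y}')<r\}$. Interaction coefficient: for a finite set $\mathcal Y\subset W$ and each $q\in\{1,\dots,N\}$, let $\mathscr N(\vec{\mathbf z}_q)\in\mathcal Y$ be a point of $\mathcal Y$ minimizing $\mathscr D(\vec{\mathbf z}_q,\cdot)$ over $\mathcal Y$ (any choice if several); then $\mathcal I(\mathcal Y)=\max_{q=1,\dots,N}\sum_{\vec{\mathbf y}\in\mathcal Y\setminus\{\mathscr N(\vec{\mathbf z}_q)\}}|\langle\mathbf g_{\vec{\mathbf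 y}},\mathbf g_q\rangle|$. *)

theory Defs
  imports Complex_Main
begin

text \<open>Vectors in C^M are represented as functions nat => complex, indexed by {..<M};
  vectors in C^N are functions nat => complex, indexed by {1..N}.\<close>

definition inprod :: "nat \<Rightarrow> (nat \<Rightarrow> complex) \<Rightarrow> (nat \<Rightarrow> complex) \<Rightarrow> complex" where
  "inprod M u v = (\<Sum>i<M. cnj (u i) * v i)"

definition norm2 :: "nat \<Rightarrow> (nat \<Rightarrow> complex) \<Rightarrow> real" where
  "norm2 M u = sqrt (\<Sum>i<M. (cmod (u i))^2)"

definition l1norm :: "nat \<Rightarrow> (nat \<Rightarrow> complex) \<Rightarrow> real" where
  "l1norm N x = (\<Sum>j\<in>{1..N}. cmod (x j))"

definition Gmat :: "nat \<Rightarrow> ('w \<Rightarrow> nat \<Rightarrow> complex) \<Rightarrow> (nat \<Rightarrow> 'w) \<Rightarrow> (nat \<Rightarrow> complex) \<Rightarrow> (nat \<Rightarrow> complex)" where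
  "Gmat N g z x = (\<lambda>i. \<Sum>j\<in>{1..N}. g (z j) i * x j)"

definition semimetric :: "nat \<Rightarrow> ('w \<Rightarrow> nat \<Rightarrow> complex) \<Rightarrow> 'w \<Rightarrow> 'w \<Rightarrow> real" where
  "semimetric M g y y' = 1 - cmod (inprod M (g y) (g y'))"

definition Dball :: "nat \<Rightarrow> ('w \<Rightarrow> nat \<Rightarrow> complex) \<Rightarrow> 'w set \<Rightarrow> real \<Rightarrow> 'w \<Rightarrow> 'w set" where
  "Dball M g W r y = {y' \<in> W. semimetric M g y y' < r}"

definition nearest_choice :: "nat \<Rightarrow> nat \<Rightarrow> ('w \<Rightarrow> nat \<Rightarrow> complex) \<Rightarrow> (nat \<Rightarrow> 'w) \<Rightarrow> 'w set \<Rightarrow> (nat \<Rightarrow> 'w) \<Rightarrow> bool" where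
  "nearest_choice M N g z Y nn \<longleftrightarrow>
     (\<forall>q\<in>{1..N}. nn q \<in> Y \<and> (\<forall>y\<in>Y. semimetric M g (z q) (nn q) \<le> semimetric M g (z q) y))"

definition interaction :: "nat \<Rightarrow> nat \<Rightarrow> ('w \<Rightarrow> nat \<Rightarrow> complex) \<Rightarrow> (nat \<Rightarrow> 'w) \<Rightarrow> 'w set \<Rightarrow> (nat \<Rightarrow> 'w) \<Rightarrow> real" where
  "interaction M N g z Y nn =
     Max ((\<lambda>q. \<Sum>y\<in>Y - {nn q}. cmod (inprod M (g y) (g (z q)))) ` {1..N})"

end

theory Submission imports Defs begin

text \<open>Dual certificate argument. Put \<open>v = \<Sum>\<^sub>j\<^sub>\<in>\<^sub>S sgn(\<rho>\<^sub>j) g\<^sub>j\<close> and \<open>c\<^sub>q = \<langle>v, g\<^sub>q\<rangle>\<close>;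
  the pairing \<open>\<Sum>\<^sub>q x\<^sub>q c\<^sub>q = \<langle>v, \<G>x\<rangle>\<close> only depends on \<open>\<G>x\<close>, so it takes the same value at
  \<open>\<rho>\<close> and at \<open>\<rho>\<^sub>\<star>\<close>. Separating the nearest point of \<open>\<Y>\<close> from the others gives
  \<open>|c\<^sub>q| \<le> 1 + \<I>\<close>, and \<open>|c\<^sub>q| \<le> 1 - r + \<I>\<close> when \<open>z\<^sub>q\<close> lies outside all balls, while at the
  support \<open>Re(\<rho>\<^sub>k c\<^sub>k) \<ge> (1 - \<I>)|\<rho>\<^sub>k|\<close> because the balls are disjoint. Hence
  \<open>(1 - \<I>)\<parallel>\<rho>\<parallel>\<^sub>1 \<le> (1 + \<I>)\<parallel>\<rho>\<^sub>\<star>\<parallel>\<^sub>1 - r\<parallel>\<rho>\<^sub>\<star>\<^sup>(\<^sup>o\<^sup>)\<parallel>\<^sub>1\<close>, and \<open>\<parallel>\<rho>\<^sub>\<star>\<parallel>\<^sub>1 \<le> \<parallel>\<rho>\<parallel>\<^sub>1\<close> concludes.\<close>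

lemma inprod_self_eq_1:
  assumes "norm2 M u = 1"
  shows "inprod M u u = 1"
proof -
  have sq: "(\<Sum>i<M. (cmod (u i))^2) = 1"
    using assms unfolding norm2_def by (metis real_sqrt_eq_1_iff)
  have "inprod M u u = (\<Sum>i<M. complex_of_real ((cmod (u i))^2))"
    unfolding inprod_def
    by (rule sum.cong[OF refl], subst mult.commute, rule complex_norm_square[symmetric])
  also have "\<dots> = 1" using sq by (metis of_real_1 of_real_sum)
  finally show ?thesis .
qed

lemma norm_inprod_le_1:
  assumes "norm2 M u = 1" "norm2 M v = 1"
  shows "cmod (inprod M u v) \<le> 1"
proof -
  have su: "(\<Sum>i<M. (cmod (u i))^2) = 1" and sv: "(\<Sum>i<M. (cmod (v i))^2) = 1"
    using assms unfolding norm2_def by (metis real_sqrt_eq_1_iff)+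
  have "cmod (inprod M u v) \<le> (\<Sum>i<M. cmod (cnj (u i) * v i))"
    unfolding inprod_def by (rule norm_sum)
  also have "\<dots> \<le> (\<Sum>i<M. ((cmod (u i))^2 + (cmod (v i))^2) / 2)"
  proof (rule sum_mono)
    fix i
    have "0 \<le> (cmod (u i) - cmod (v i))^2" by simp
    then show "cmod (cnj (u i) * v i) \<le> ((cmod (u i))^2 + (cmod (v i))^2) / 2"
      by (simp add: norm_mult power2_diff)
  qed
  also have "\<dots> = 1" using su sv by (simp add: sum_divide_distrib[symmetric] sum.distrib)
  finally show ?thesis .
qed

lemma semimetric_self:
  assumes "norm2 M (g y) = 1"
  shows "semimetric M g y y = 0"
  using inprod_self_eq_1[OF assms] by (simp add: semimetric_def)

lemma inprod_Gmat:
  "inprod M u (Gmat N g z x) = (\<Sum>q\<in>{1..N}. x q * inprod M u (g (z q)))"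
  unfolding inprod_def Gmat_def
  by (simp add: sum_distrib_left sum_distrib_right mult_ac sum.swap[of _ "{..<M}"])

lemma mult_cnj_sgn: "w * cnj (sgn w) = complex_of_real (cmod w)"
proof (cases "w = 0")
  case False
  have "w * cnj (sgn w) = w * cnj w / complex_of_real (cmod w)"
    by (simp add: sgn_div_norm scaleR_conv_of_real divide_inverse mult_ac)
  also have "\<dots> = complex_of_real (cmod w)"
    using False by (simp add: complex_norm_square[symmetric] power2_eq_square)
  finally show ?thesis .
qed simp

lemma norm_sgn_weighted_sum_le:
  assumes "inj_on z A"
  shows "cmod (\<Sum>j\<in>A. cnj (sgn (a j)) * f (z j)) \<le> (\<Sum>y\<in>z ` A. cmod (f y))"
proof -
  have "cmod (\<Sum>j\<in>A. cnj (sgn (a j)) * f (z j)) \<le> (\<Sum>j\<in>A. cmod (cnj (sgn (a j)) * f (z j)))"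
    by (rule norm_sum)
  also have "\<dots> \<le> (\<Sum>j\<in>A. cmod (f (z j)))"
    by (rule sum_mono) (simp add: norm_mult norm_sgn mult_left_le_one_le)
  also have "\<dots> = (\<Sum>y\<in>z ` A. cmod (f y))"
    using sum.reindex[OF assms, of "\<lambda>y. cmod (f y)"] by simp
  finally show ?thesis .
qed

lemma interaction_ge:
  assumes "q \<in> {1..N}"
  shows "(\<Sum>y\<in>Y - {nn q}. cmod (inprod M (g y) (g (z q)))) \<le> interaction M N g z Y nn"
  unfolding interaction_def using assms by (intro Max_ge) auto

lemma nearest_choice_center:
  assumes g_unit: "\<forall>y\<in>W. norm2 M (g y) = 1"
    and z_in: "\<forall>j\<in>{1..N}. z j \<in> W"
    and S_sub: "S \<subseteq> {1..N}" and "0 < r"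
    and balls_disjoint: "\<forall>j\<in>S. \<forall>k\<in>S. j \<noteq> k \<longrightarrow> Dball M g W r (z j) \<inter> Dball M g W r (z k) = {}"
    and nn_choice: "nearest_choice M N g z (z ` S) nn"
    and k: "k \<in> S"
  shows "nn k = z k"
proof -
  have kN: "k \<in> {1..N}" using k S_sub by blast
  obtain j where j: "j \<in> S" "nn k = z j"
    using nn_choice kN unfolding nearest_choice_def by blast
  have zj: "z j \<in> W" and zk: "z k \<in> W" using z_in S_sub j k by blast+
  have "semimetric M g (z k) (nn k) \<le> semimetric M g (z k) (z k)"
    using nn_choice kN k unfolding nearest_choice_def by blast
  then have "z j \<in> Dball M g W r (z k)"
    using semimetric_self g_unit zk zj j \<open>0 < r\<close> unfolding Dball_def by fastforce
  moreover have "z j \<in> Dball M g W r (z j)"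
    using semimetric_self[of M g "z j"] g_unit zj \<open>0 < r\<close> unfolding Dball_def by simp
  ultimately have "j = k" using balls_disjoint j k by blast
  with j show ?thesis by simp
qed

definition dual_cert ::
    "nat \<Rightarrow> ('w \<Rightarrow> nat \<Rightarrow> complex) \<Rightarrow> (nat \<Rightarrow> 'w) \<Rightarrow> nat set \<Rightarrow> (nat \<Rightarrow> complex) \<Rightarrow> nat \<Rightarrow> complex" where
  "dual_cert M g z S rho q = (\<Sum>j\<in>S. cnj (sgn (rho j)) * inprod M (g (z j)) (g (z q)))"

lemma sum_mult_dual_cert:
  "(\<Sum>q\<in>{1..N}. x q * dual_cert M g z S rho q)
     = (\<Sum>j\<in>S. cnj (sgn (rho j)) * inprod M (g (z j)) (Gmat N g z x))"
  unfolding dual_cert_def inprod_Gmat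
  by (simp add: sum_distrib_left sum.swap[of _ S] mult_ac)

lemma norm_dual_cert_le:
  assumes g_unit: "\<forall>y\<in>W. norm2 M (g y) = 1"
    and z_in: "\<forall>j\<in>{1..N}. z j \<in> W" and S_sub: "S \<subseteq> {1..N}" and "inj_on z S"
    and nn_choice: "nearest_choice M N g z (z ` S) nn"
    and q: "q \<in> {1..N}"
  shows "cmod (dual_cert M g z S rho q)
           \<le> (if z q \<in> (\<Union>j\<in>S. Dball M g W r (z j)) then 1 else 1 - r)
              + interaction M N g z (z ` S) nn"
proof -
  let ?ip = "\<lambda>y. inprod M (g y) (g (z q))"
  have nnY: "nn q \<in> z ` S" using nn_choice q unfolding nearest_choice_def by blast
  have "finite S" using S_sub finite_subset by blast
  have "cmod (dual_cert M g z S rho q) \<le> (\<Sum>y\<in>z ` S. cmod (?ip y))"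
    unfolding dual_cert_def by (rule norm_sgn_weighted_sum_le) fact
  also have "\<dots> = cmod (?ip (nn q)) + (\<Sum>y\<in>z ` S - {nn q}. cmod (?ip y))"
    using \<open>finite S\<close> nnY by (intro sum.remove) auto
  also have "\<dots> \<le> cmod (?ip (nn q)) + interaction M N g z (z ` S) nn"
    using interaction_ge[OF q] by simp
  finally have nearest_split: "cmod (dual_cert M g z S rho q) \<le> cmod (?ip (nn q)) + interaction M N g z (z ` S) nn" .
  have nnW: "nn q \<in> W" and zW: "z q \<in> W" using nnY S_sub z_in q by auto
  have "cmod (?ip (nn q)) \<le> 1"
    using g_unit nnW zW by (intro norm_inprod_le_1) auto
  moreover have "cmod (?ip (nn q)) \<le> 1 - r" if "z q \<notin> (\<Union>j\<in>S. Dball M g W r (z j))"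
  proof -
    obtain j where "j \<in> S" and nn_q: "nn q = z j" using nnY by blast
    with that have "z q \<notin> Dball M g W r (nn q)" unfolding nn_q by blast
    with zW have "\<not> semimetric M g (nn q) (z q) < r" unfolding Dball_def by blast
    then show ?thesis unfolding semimetric_def by linarith
  qed
  ultimately have "cmod (?ip (nn q)) \<le> (if z q \<in> (\<Union>j\<in>S. Dball M g W r (z j)) then 1 else 1 - r)"
    by simp
  with nearest_split show ?thesis by linarith
qed

lemma Re_mult_dual_cert_ge:
  assumes S_sub: "S \<subseteq> {1..N}" and "inj_on z S" and k: "k \<in> S"
    and unit_k: "norm2 M (g (z k)) = 1" and nn_k: "nn k = z k"
  shows "(1 - interaction M N g z (z ` S) nn) * cmod (rho k) \<le> Re (rho k * dual_cert M g z S rho k)"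
proof -
  let ?ip = "\<lambda>y. inprod M (g y) (g (z k))"
  let ?I = "interaction M N g z (z ` S) nn"
  define e where "e = (\<Sum>j\<in>S - {k}. cnj (sgn (rho j)) * ?ip (z j))"
  have "finite S" using S_sub finite_subset by blast
  have "dual_cert M g z S rho k = cnj (sgn (rho k)) * ?ip (z k) + e"
    unfolding dual_cert_def e_def using sum.remove[OF \<open>finite S\<close> k] by simp
  then have cert_k: "rho k * dual_cert M g z S rho k = complex_of_real (cmod (rho k)) + rho k * e"
    using inprod_self_eq_1[OF unit_k] by (simp add: distrib_left mult_cnj_sgn mult.assoc[symmetric])
  have others: "z ` (S - {k}) = z ` S - {nn k}"
    using \<open>inj_on z S\<close> k unfolding nn_k by (auto simp: inj_on_def)
  have "cmod e \<le> (\<Sum>y\<in>z ` S - {nn k}. cmod (?ip y))"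
    unfolding e_def others[symmetric] using \<open>inj_on z S\<close>
    by (intro norm_sgn_weighted_sum_le) (rule inj_on_diff)
  also have "\<dots> \<le> ?I" using interaction_ge k S_sub by blast
  finally have "cmod (rho k * e) \<le> cmod (rho k) * ?I"
    by (simp add: norm_mult mult_left_mono)
  moreover have "- Re (rho k * e) \<le> cmod (rho k * e)"
    using complex_Re_le_cmod[of "- (rho k * e)"] by simp
  ultimately show ?thesis using cert_k by (simp add: algebra_simps)
qed

lemma norm_l1_pairing_le:
  assumes "\<forall>q\<in>{1..N}. cmod (c q) \<le> (if P q then 1 else 1 - r) + I"
  shows "cmod (\<Sum>q\<in>{1..N}. x q * c q)
           \<le> (1 + I) * l1norm N x - r * l1norm N (\<lambda>q. if P q then 0 else x q)"
proof -
  have "cmod (\<Sum>q\<in>{1..N}. x q * c q) \<le> (\<Sum>q\<in>{1..N}. cmod (x q) * cmod (c q))"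
    using norm_sum by (metis (no_types, lifting) norm_mult sum.cong)
  also have "\<dots> \<le> (\<Sum>q\<in>{1..N}. (1 + I) * cmod (x q) - r * cmod (if P q then 0 else x q))"
  proof (rule sum_mono)
    fix q assume "q \<in> {1..N}"
    then have "cmod (x q) * cmod (c q) \<le> cmod (x q) * ((if P q then 1 else 1 - r) + I)"
      using assms by (simp add: mult_left_mono)
    then show "cmod (x q) * cmod (c q) \<le> (1 + I) * cmod (x q) - r * cmod (if P q then 0 else x q)"
      by (cases "P q") (simp_all add: algebra_simps)
  qed
  also have "\<dots> = (1 + I) * l1norm N x - r * l1norm N (\<lambda>q. if P q then 0 else x q)"
    unfolding l1norm_def by (simp add: sum_subtractf sum_distrib_left)
  finally show ?thesis .
qed

lemma l1_le_Re_pairing: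
  assumes S_sub: "S \<subseteq> {1..N}" and supp: "\<forall>j\<in>{1..N} - S. x j = 0"
    and ge: "\<forall>k\<in>S. a * cmod (x k) \<le> Re (x k * c k)"
  shows "a * l1norm N x \<le> Re (\<Sum>q\<in>{1..N}. x q * c q)"
proof -
  have "finite S" using S_sub finite_subset by blast
  have "a * l1norm N x = (\<Sum>k\<in>S. a * cmod (x k))"
    unfolding l1norm_def sum_distrib_left
    by (rule sum.mono_neutral_right) (use S_sub supp \<open>finite S\<close> in auto)
  also have "\<dots> \<le> (\<Sum>k\<in>S. Re (x k * c k))" using ge by (intro sum_mono) blast
  also have "\<dots> = Re (\<Sum>q\<in>{1..N}. x q * c q)"
    unfolding Re_sum by (rule sum.mono_neutral_left) (use S_sub supp \<open>finite S\<close> in auto)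
  finally show ?thesis .
qed

lemma outer_mass_bound:
  fixes A B I r out :: real
  assumes "0 < r" "r \<le> 2" "0 \<le> A" "out \<le> A" "A \<le> B"
    and "(1 - I) * B \<le> (1 + I) * A - r * out"
  shows "out \<le> 2 * I / r * A"
proof (cases "I < 1")
  case True
  then have "(1 - I) * A \<le> (1 - I) * B" using assms by (simp add: mult_left_mono)
  then have "r * out \<le> 2 * I * A" using assms by (simp add: algebra_simps)
  then show ?thesis using assms by (simp add: field_simps)
next
  case False
  then have "1 \<le> 2 * I / r" using assms by (simp add: field_simps)
  then have "A \<le> 2 * I / r * A" using assms mult_right_mono[of 1 "2 * I / r" A] by simp
  then show ?thesis using assms by linarith
qed

theorem theorem4:
  fixes M N s :: nat and W :: "'w set" and g :: "'w \<Rightarrow> nat \<Rightarrow> complex"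
    and z :: "nat \<Rightarrow> 'w" and S :: "nat set" and rho rhos :: "nat \<Rightarrow> complex"
    and r :: real and nn :: "nat \<Rightarrow> 'w"
  assumes M_pos: "M \<ge> 1"
    and g_unit: "\<forall>y\<in>W. norm2 M (g y) = 1"
    and z_in: "\<forall>j\<in>{1..N}. z j \<in> W"
    and z_distinct: "inj_on z {1..N}"
    and S_sub: "S \<subseteq> {1..N}" and S_card: "card S = s"
    and rho_supp: "\<forall>j\<in>{1..N} - S. rho j = 0"
    and r_range: "0 < r" "r < 1"
    and balls_disjoint: "\<forall>j\<in>S. \<forall>k\<in>S. j \<noteq> k \<longrightarrow> Dball M g W r (z j) \<inter> Dball M g W r (z k) = {}"
    and rhos_feas: "Gmat N g z rhos = Gmat N g z rho"
    and rhos_min: "\<forall>x. Gmat N g z x = Gmat N g z rho \<longrightarrow> l1norm N rhos \<le> l1norm N x"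
    and nn_choice: "nearest_choice M N g z (z ` S) nn"
  shows "l1norm N (\<lambda>q. if z q \<in> (\<Union>j\<in>S. Dball M g W r (z j)) then 0 else rhos q)
         \<le> 2 * interaction M N g z (z ` S) nn / r * l1norm N rhos"
proof -
  let ?I = "interaction M N g z (z ` S) nn"
  let ?c = "dual_cert M g z S rho"
  let ?pair = "\<lambda>x. \<Sum>q\<in>{1..N}. x q * ?c q"
  let ?out = "l1norm N (\<lambda>q. if z q \<in> (\<Union>j\<in>S. Dball M g W r (z j)) then 0 else rhos q)"
  have inj: "inj_on z S" using z_distinct S_sub inj_on_subset by blast
  have same_pairing: "?pair rhos = ?pair rho"
    unfolding sum_mult_dual_cert rhos_feas ..
  have "(1 - ?I) * l1norm N rho \<le> Re (?pair rho)"
    using Re_mult_dual_cert_ge[OF S_sub inj] nearest_choice_center[OF g_unit z_in S_sub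
          r_range(1) balls_disjoint nn_choice] g_unit z_in S_sub
    by (intro l1_le_Re_pairing[OF S_sub rho_supp]) blast
  also have "\<dots> \<le> cmod (?pair rhos)"
    unfolding same_pairing by (rule complex_Re_le_cmod)
  also have "\<dots> \<le> (1 + ?I) * l1norm N rhos - r * ?out"
    using norm_dual_cert_le[OF g_unit z_in S_sub inj nn_choice] by (intro norm_l1_pairing_le) blast
  finally have key: "(1 - ?I) * l1norm N rho \<le> (1 + ?I) * l1norm N rhos - r * ?out" .
  have out_le: "?out \<le> l1norm N rhos"
    unfolding l1norm_def by (rule sum_mono) simp
  have nonneg: "0 \<le> l1norm N rhos"
    unfolding l1norm_def by (simp add: sum_nonneg)
  have minimal: "l1norm N rhos \<le> l1norm N rho" using rhos_min by blast
  have "r \<le> 2" using r_range by simp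
  from outer_mass_bound[OF r_range(1) this nonneg out_le minimal key] show ?thesis .
qed

end
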